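(* Let $\ell\in\mathbb{N}$ and let $s>1$ be real. For $M\geq 1$ let \[ P_{\ell}(s;M):=\sum_{k\in \Omega(\ell):\, k\geq M}\frac{1}{k^{s}}, \] where $\Omega(\ell)$ is the set of positive integers with at most $\ell$ (not necessarily distinct) prime factors. Then there exist constants $C_1,C_2>0$ and $M_0$ such that for every $M\geq M_0$, \[ C_1\,\frac{(\log\log M)^{\ell-1}}{M^{s-1}\log M}\;\leq\; P_{\ell}(s;M)\;\leq\; C_2\,\frac{(\log\log M)^{\ell-1}}{M^{s-1}\log M}. \]
   Context: $\Omega(\ell)$ denotes the set of $\ell$-almost primes: positive integers with at most $\ell$ prime factors counted with multiplicity (e.g. $\Omega(1)$ is the set of primes, and $4,6\in\Omega(2)$). *)

theory Defs
  imports "HOL-Analysis.Analysis" "HOL-Computational_Algebra.Primes"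
begin

definition almost_primes :: "nat \<Rightarrow> nat set" where
  "almost_primes l = {k. k > 0 \<and> size (prime_factorization k) \<le> l}"

definition P_tail :: "nat \<Rightarrow> real \<Rightarrow> real \<Rightarrow> real" where
  "P_tail l s M = (\<Sum>\<^sub>\<infinity> k \<in> {k \<in> almost_primes l. real k \<ge> M}. 1 / (real k powr s))"

end

(* Let pi(x) count the primes up to x and S(x) the sum of their reciprocals. Chebyshev's bounds
   pi(x) = Theta(x / ln x), from the central binomial coefficient, give S(x) = Theta(ln ln x) by
   summing over geometric blocks of primes. Let pi_k(x) count the n <= x with exactly k prime
   factors. Splitting off the largest prime factor q > x^(1/2k) of such an n, and bounding the sum
   of 1/m over the cofactors m by S(x)^(k-1), gives pi_k(x) = O(x (ln ln x)^(k-1) / ln x);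
   conversely the products of a prime q <= x/m with an m built from k - 1 primes below x^(1/2k)
   give the matching lower bound, since those 1/m sum to at least S(x^(1/2k))^(k-1) / (k-1)!.
   Finally the tail of sum 1/n^s over numbers with at most l prime factors is cut into dyadic
   blocks [2^i M, 2^(i+1) M) for the upper bound, while for the lower bound a single block
   [M, K M] already contains >> M (ln ln M)^(l-1) / ln M such numbers. *)
theory Submission
  imports Defs "HOL-Number_Theory.Prime_Powers" "HOL-Real_Asymp.Real_Asymp"
begin

lemma power_ivl_realE:
  fixes x :: real and b :: nat
  assumes "x \<ge> 1" "b \<ge> 2"
  obtains j :: nat where "real b ^ j \<le> x" "x < real b ^ (j + 1)"
proof -
  have "1 \<le> nat \<lfloor>x\<rfloor>" using assms by linarith
  then obtain j where j: "b ^ j \<le> nat \<lfloor>x\<rfloor>" "nat \<lfloor>x\<rfloor> + 1 \<le> b ^ (j + 1)"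
    using ex_power_ivl1[of b "nat \<lfloor>x\<rfloor>"] assms by auto
  have "real b ^ j \<le> real (nat \<lfloor>x\<rfloor>)" "real (nat \<lfloor>x\<rfloor>) + 1 \<le> real b ^ (j + 1)"
    using j by (metis of_nat_le_iff of_nat_power of_nat_1 of_nat_add)+
  moreover have "real (nat \<lfloor>x\<rfloor>) \<le> x" "x < real (nat \<lfloor>x\<rfloor>) + 1"
    using assms by linarith+
  ultimately show ?thesis
    by (intro that[of j]) linarith+
qed

definition primes_upto :: "real \<Rightarrow> nat set" where
  "primes_upto x = {p. prime p \<and> real p \<le> x}"

definition primes_between :: "real \<Rightarrow> real \<Rightarrow> nat set" where
  "primes_between y z = {p. prime p \<and> y < real p \<and> real p \<le> z}"

definition prime_pi :: "real \<Rightarrow> real" where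
  "prime_pi x = real (card (primes_upto x))"

definition prime_recip_sum :: "real \<Rightarrow> real" where
  "prime_recip_sum x = (\<Sum>p\<in>primes_upto x. 1 / real p)"

lemma finite_primes_upto [simp]: "finite (primes_upto x)"
  by (rule finite_subset[of _ "{..nat \<lfloor>x\<rfloor>}"]) (auto simp: primes_upto_def le_nat_floor)

lemma finite_primes_between [simp]: "finite (primes_between y z)"
  by (rule finite_subset[OF _ finite_primes_upto[of z]])
    (auto simp: primes_upto_def primes_between_def)

lemma primes_upto_mono: "x \<le> y \<Longrightarrow> primes_upto x \<subseteq> primes_upto y"
  unfolding primes_upto_def by auto

lemma prime_pi_mono: "x \<le> y \<Longrightarrow> prime_pi x \<le> prime_pi y"
  unfolding prime_pi_def by (simp add: card_mono primes_upto_mono)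

lemma prime_recip_sum_mono: "x \<le> y \<Longrightarrow> prime_recip_sum x \<le> prime_recip_sum y"
  unfolding prime_recip_sum_def by (intro sum_mono2 primes_upto_mono) auto

lemma prime_recip_sum_nonneg: "prime_recip_sum x \<ge> 0"
  unfolding prime_recip_sum_def by (intro sum_nonneg) auto

lemma primes_upto_of_nat: "primes_upto (real N) = {p. prime p \<and> p \<le> N}"
  unfolding primes_upto_def by auto

lemma prime_pi_of_nat_le: "prime_pi (real N) \<le> real N"
proof -
  have "primes_upto (real N) \<subseteq> {1..N}"
    by (auto simp: primes_upto_of_nat Suc_le_eq prime_gt_0_nat)
  then show ?thesis
    unfolding prime_pi_def using card_mono[of "{1..N}"] by fastforce
qed

lemma primes_upto_split:
  assumes "y \<le> z"
  shows "primes_upto z = primes_upto y \<union> primes_between y z"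
    and "primes_upto y \<inter> primes_between y z = {}"
  using assms unfolding primes_upto_def primes_between_def by auto

lemma prime_pi_split:
  assumes "y \<le> z"
  shows "prime_pi z = prime_pi y + real (card (primes_between y z))"
  unfolding prime_pi_def primes_upto_split(1)[OF assms]
  using primes_upto_split(2)[OF assms] by (simp add: card_Un_disjoint)

lemma prime_recip_sum_split:
  assumes "y \<le> z"
  shows "prime_recip_sum z = prime_recip_sum y + (\<Sum>p\<in>primes_between y z. 1 / real p)"
  unfolding prime_recip_sum_def primes_upto_split(1)[OF assms]
  using primes_upto_split(2)[OF assms] by (simp add: sum.union_disjoint)

section \<open>Chebyshev's bounds\<close>

lemma prod_primes_dvd:
  fixes A :: "nat set"
  assumes "finite A" "\<And>p. p \<in> A \<Longrightarrow> prime p" "\<And>p. p \<in> A \<Longrightarrow> p dvd m"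
  shows "\<Prod>A dvd m"
  using assms
proof (induction A rule: finite_induct)
  case (insert p A)
  then have "coprime p (\<Prod>A)"
    by (intro prod_coprime_right) (metis insertCI primes_coprime)
  with insert show ?case by (simp add: divides_mult)
qed simp

lemma prime_dvd_central_binomial:
  assumes "prime p" "n < p" "p \<le> 2 * n"
  shows "p dvd (2 * n choose n)"
proof -
  have "fact n * fact n * (2 * n choose n) = (fact (2 * n) :: nat)"
    using binomial_fact_lemma[of n "2 * n"] by simp
  moreover have "p dvd (fact (2 * n) :: nat)" "\<not> p dvd (fact n :: nat)"
    using assms prime_dvd_fact_iff by auto
  ultimately show ?thesis using assms(1) by (metis prime_dvd_mult_iff)
qed

text \<open>The primes in \<open>(n, 2n]\<close> all divide \<open>2n choose n \<le> 4\<^sup>n\<close>.\<close>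

lemma card_primes_between_double_le:
  fixes n :: nat
  assumes "n \<ge> 2"
  shows "real (card (primes_between (real n) (real (2 * n)))) * ln n \<le> 2 * n * ln 2"
proof -
  let ?A = "{p. prime p \<and> n < p \<and> p \<le> 2 * n}"
  have A: "primes_between (real n) (real (2 * n)) = ?A"
    unfolding primes_between_def of_nat_less_iff of_nat_le_iff ..
  have "\<Prod>?A dvd (2 * n choose n)"
    by (rule prod_primes_dvd) (auto simp: prime_dvd_central_binomial)
  then have "\<Prod>?A \<le> (2 * n choose n)"
    by (rule dvd_imp_le) (simp add: assms)
  also have "\<dots> \<le> 2 ^ (2 * n)" by (rule binomial_le_pow2)
  finally have "n ^ card ?A \<le> (2::nat) ^ (2 * n)"
    using prod_mono[of ?A "\<lambda>_. n" id] by force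
  then have "real n ^ card ?A \<le> 2 ^ (2 * n)"
    by (metis of_nat_le_iff of_nat_numeral of_nat_power)
  then have "ln (real n ^ card ?A) \<le> ln (2 ^ (2 * n))"
    using assms by (subst ln_le_cancel_iff) auto
  then show ?thesis unfolding A using assms by (simp add: ln_realpow)
qed

text \<open>The induction step needs \<open>4/m + 2/m \<le> 8/(m+1)\<close>, i.e. \<open>m \<ge> 3\<close>; below that the trivial
  bound \<open>\<pi>(N) \<le> N\<close> suffices.\<close>

lemma prime_pi_pow2_le:
  assumes "k \<ge> 1"
  shows "prime_pi (2 ^ k) \<le> 4 * 2 ^ k / k"
proof (cases "k \<le> 4")
  case True
  have "prime_pi (2 ^ k) \<le> 2 ^ k" using prime_pi_of_nat_le[of "2 ^ k"] by simp
  also have "\<dots> \<le> 4 * 2 ^ k / k" using True assms by (simp add: field_simps)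
  finally show ?thesis .
next
  case False
  then have "4 \<le> k" by simp
  then show ?thesis
  proof (induction k rule: dec_induct)
    case base
    show ?case using prime_pi_of_nat_le[of "2 ^ 4"] by simp
  next
    case (step m)
    define t :: real where "t = 2 ^ m"
    have "real (card (primes_between (2 ^ m) (2 * 2 ^ m))) * (m * ln 2) \<le> 2 * t * ln 2"
      using card_primes_between_double_le[of "2 ^ m"] step(1)
      by (simp add: t_def ln_realpow self_le_power)
    then have new: "real (card (primes_between t (2 * t))) \<le> 2 * t / m"
      using step(1) by (simp add: t_def field_simps)
    have "prime_pi (2 ^ Suc m) = prime_pi t + real (card (primes_between t (2 * t)))"
      by (simp add: t_def prime_pi_split)
    also have "\<dots> \<le> 4 * t / m + 2 * t / m"
      using step.IH new by (simp add: t_def)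
    also have "\<dots> \<le> 4 * 2 ^ Suc m / Suc m"
      using step(1) by (simp add: t_def field_simps)
    finally show ?case .
  qed
qed

lemma prime_pi_le:
  assumes "x \<ge> 2"
  shows "prime_pi x \<le> 8 * x / ln x"
proof -
  obtain j :: nat where j: "2 ^ j \<le> x" "x < 2 ^ (j + 1)"
    using power_ivl_realE[of x 2] assms by auto
  have "ln x < ln (2 ^ (j + 1))" using j assms by (subst ln_less_cancel_iff) auto
  also have "\<dots> = (j + 1) * ln 2" using ln_realpow[of 2 "j + 1"] by simp
  also have "\<dots> \<le> j + 1" using ln_2_less_1 by simp
  finally have lnx: "ln x < j + 1" .
  have "prime_pi x \<le> prime_pi (2 ^ (j + 1))" using j by (intro prime_pi_mono) simp
  also have "\<dots> \<le> 8 * 2 ^ j / (j + 1)" using prime_pi_pow2_le[of "j + 1"] by simp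
  also have "\<dots> \<le> 8 * x / (j + 1)" using j by (simp add: divide_right_mono)
  also have "\<dots> \<le> 8 * x / ln x" using lnx assms by (intro divide_left_mono) auto
  finally show ?thesis .
qed

definition chebyshev_psi :: "nat \<Rightarrow> real" where
  "chebyshev_psi N = (\<Sum>d = 1..N. mangoldt d)"

lemma card_multiples_upto:
  assumes "d > 0"
  shows "card {m \<in> {1..N}. d dvd m} = N div d"
proof -
  have "{m \<in> {1..N}. d dvd m} = (\<lambda>k. d * k) ` {1..N div d}"
  proof (intro equalityI subsetI)
    fix m assume "m \<in> {m \<in> {1..N}. d dvd m}"
    then obtain k where "m = d * k" "1 \<le> d * k" "d * k \<le> N" by auto
    then show "m \<in> (\<lambda>k. d * k) ` {1..N div d}"
      using assms by (auto simp: less_eq_div_iff_mult_less_eq mult.commute intro!: Nat.gr0I)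
  qed (use assms in \<open>auto simp: less_eq_div_iff_mult_less_eq mult.commute\<close>)
  moreover have "inj_on (\<lambda>k. d * k) {1..N div d}" using assms by (auto simp: inj_on_def)
  ultimately show ?thesis by (simp add: card_image)
qed

lemma ln_fact_eq_sum_mangoldt:
  "ln (fact N :: real) = (\<Sum>d = 1..N. mangoldt d * real (N div d))"
proof -
  have "ln (fact N :: real) = (\<Sum>m = 1..N. ln (real m))"
    unfolding fact_prod by (subst ln_prod[symmetric]) (auto simp: of_nat_prod)
  also have "\<dots> = (\<Sum>m = 1..N. \<Sum>d \<in> {d. d \<in> {1..N} \<and> d dvd m}. mangoldt d)"
  proof (intro sum.cong refl)
    fix m assume m: "m \<in> {1..N}"
    then have "{d. d \<in> {1..N} \<and> d dvd m} = {d. d dvd m}"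
      by (auto dest: dvd_imp_le intro: Nat.gr0I)
    then show "ln (real m) = (\<Sum>d \<in> {d. d \<in> {1..N} \<and> d dvd m}. mangoldt d)"
      using mangoldt_sum[of m, where 'a = real] m by simp
  qed
  also have "\<dots> = (\<Sum>d = 1..N. \<Sum>m \<in> {m. m \<in> {1..N} \<and> d dvd m}. mangoldt d)"
    by (rule sum.swap_restrict) auto
  also have "\<dots> = (\<Sum>d = 1..N. mangoldt d * real (N div d))"
  proof (intro sum.cong refl)
    fix d assume "d \<in> {1..N}"
    then have "card {m. m \<in> {1..N} \<and> d dvd m} = N div d"
      using card_multiples_upto[of d N] by simp
    then show "(\<Sum>m \<in> {m. m \<in> {1..N} \<and> d dvd m}. mangoldt d) = mangoldt d * real (N div d)"
      by simp
  qed
  finally show ?thesis .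
qed

lemma div_double_le: "d > 0 \<Longrightarrow> (2 * n) div d \<le> 2 * (n div d) + 1" for d n :: nat
proof -
  assume d: "d > 0"
  have "n = d * (n div d) + n mod d" by simp
  then have "2 * n = d * (2 * (n div d)) + 2 * (n mod d)" by linarith
  also have "\<dots> < d * (2 * (n div d) + 2)" using d by simp
  finally have "(2 * n) div d < 2 * (n div d) + 2"
    using d by (simp add: div_less_iff_less_mult mult.commute)
  then show ?thesis by simp
qed

lemma ln_central_binomial_le_psi: "ln (real (2 * n choose n)) \<le> chebyshev_psi (2 * n)"
proof -
  have "fact n * fact n * (2 * n choose n) = (fact (2 * n) :: nat)"
    using binomial_fact_lemma[of n "2 * n"] by simp
  then have "real (fact n * fact n * (2 * n choose n)) = real (fact (2 * n))" by (rule arg_cong)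
  then have fact_eq: "fact n * fact n * real (2 * n choose n) = fact (2 * n)"
    by (simp only: of_nat_mult of_nat_fact)
  have "ln (fact (2 * n) :: real) = ln (fact n) + ln (fact n) + ln (real (2 * n choose n))"
    unfolding fact_eq[symmetric] by (simp add: ln_mult)
  then have "ln (real (2 * n choose n)) = ln (fact (2 * n)) - 2 * ln (fact n :: real)"
    by simp
  also have "ln (fact n :: real) = (\<Sum>d = 1..2 * n. mangoldt d * real (n div d))"
    unfolding ln_fact_eq_sum_mangoldt by (rule sum.mono_neutral_left) auto
  also have "ln (fact (2 * n)) - 2 * (\<Sum>d = 1..2 * n. mangoldt d * real (n div d))
      = (\<Sum>d = 1..2 * n. mangoldt d * (real ((2 * n) div d) - 2 * real (n div d)))"
    by (simp add: ln_fact_eq_sum_mangoldt sum_subtractf sum_distrib_left right_diff_distrib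
        mult.left_commute)
  also have "\<dots> \<le> (\<Sum>d = 1..2 * n. mangoldt d)"
  proof (intro sum_mono)
    fix d :: nat assume "d \<in> {1..2 * n}"
    then have "(2 * n) div d \<le> 2 * (n div d) + 1" by (intro div_double_le) simp
    then have "real ((2 * n) div d) \<le> real (2 * (n div d) + 1)" by (simp only: of_nat_le_iff)
    then have "real ((2 * n) div d) \<le> 2 * real (n div d) + 1" by simp
    then show "mangoldt d * (real ((2 * n) div d) - 2 * real (n div d)) \<le> mangoldt d"
      using mangoldt_nonneg[of d] by (simp add: mult_left_le)
  qed
  finally show ?thesis unfolding chebyshev_psi_def .
qed

text \<open>There are at most \<open>log p N\<close> such prime powers, each of weight \<open>ln p\<close>.\<close>

lemma sum_mangoldt_prime_powers_le:
  assumes p: "prime p" and N: "N \<ge> 1"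
  shows "(\<Sum>d \<in> {d \<in> {1..N}. primepow d \<and> aprimedivisor d = p}. mangoldt d) \<le> ln N"
proof -
  let ?F = "{d \<in> {1..N}. primepow d \<and> aprimedivisor d = p}"
  define k where "k = nat \<lfloor>log p N\<rfloor>"
  have p1: "real p > 1" using prime_gt_1_nat[OF p] by simp
  have "?F \<subseteq> (\<lambda>a. p ^ a) ` {1..k}"
  proof
    fix d assume d: "d \<in> ?F"
    define a where "a = multiplicity p d"
    have pa: "p ^ a = d" using primepow_decompose[of d] d by (simp add: a_def)
    moreover have "a \<ge> 1"
      using d multiplicity_aprimedivisor_gt_0_nat[of d] primepow_gt_Suc_0[of d] by (simp add: a_def)
    moreover have "real a \<le> log p N"
      using pa d p1 by (intro le_log_of_power) (auto simp flip: of_nat_power)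
    then have "a \<le> k" unfolding k_def by (simp add: le_nat_floor)
    ultimately show "d \<in> (\<lambda>a. p ^ a) ` {1..k}" by force
  qed
  then have "card ?F \<le> card ((\<lambda>a. p ^ a) ` {1..k})" by (intro card_mono) auto
  also have "\<dots> \<le> k" using card_image_le[of "{1..k}" "\<lambda>a. p ^ a"] by simp
  finally have card: "card ?F \<le> k" .
  have "(\<Sum>d\<in>?F. mangoldt d) = card ?F * ln p" by (simp add: mangoldt_def)
  also have "\<dots> \<le> log p N * ln p"
  proof (rule mult_right_mono)
    have "log p N \<ge> 0" using p1 N by simp
    then have "real k \<le> log p N" unfolding k_def by linarith
    then show "real (card ?F) \<le> log p N" using card by linarith
  qed (use p1 in simp)
  also have "\<dots> = ln N" using p1 by (simp add: log_def)
  finally show ?thesis .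
qed

lemma chebyshev_psi_le:
  assumes "N \<ge> 1"
  shows "chebyshev_psi N \<le> prime_pi (real N) * ln N"
proof -
  let ?S = "{d \<in> {1..N}. primepow d}"
  let ?T = "primes_upto (real N)"
  have "chebyshev_psi N = (\<Sum>d\<in>?S. mangoldt d)"
    unfolding chebyshev_psi_def by (rule sum.mono_neutral_right) (auto simp: mangoldt_def)
  also have "\<dots> = (\<Sum>p\<in>?T. \<Sum>d \<in> {d \<in> ?S. aprimedivisor d = p}. mangoldt d)"
  proof (rule sum.group[symmetric])
    show "aprimedivisor ` ?S \<subseteq> ?T"
    proof
      fix q assume "q \<in> aprimedivisor ` ?S"
      then obtain d where d: "d \<in> ?S" "q = aprimedivisor d" by blast
      then have "d > Suc 0" by (simp add: primepow_gt_Suc_0)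
      then show "q \<in> ?T"
        using d aprimedivisor_nat(1)[of d] aprimedivisor_le_nat[of d]
        by (auto simp: primes_upto_def)
    qed
  qed auto
  also have "\<dots> \<le> (\<Sum>p\<in>?T. ln N)"
    using sum_mangoldt_prime_powers_le assms
    by (intro sum_mono) (auto simp: primes_upto_def conj_ac)
  also have "\<dots> = prime_pi (real N) * ln N" by (simp add: prime_pi_def)
  finally show ?thesis .
qed

lemma prime_pi_ge:
  assumes "x \<ge> 2"
  shows "prime_pi x \<ge> ln 2 / 4 * x / ln x"
proof -
  define n where "n = nat \<lfloor>x / 2\<rfloor>"
  have "real n \<le> x / 2" "x / 2 < real n + 1" using assms unfolding n_def by linarith+
  moreover have "n \<ge> 1" using assms unfolding n_def by linarith
  ultimately have n: "real n \<ge> 1" "2 * real n \<le> x" "x \<le> 4 * real n" by linarith+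
  have "2 * n \<le> (2::nat) ^ n" using \<open>n \<ge> 1\<close> by (induction n rule: dec_induct) auto
  then have "2 * real n \<le> 2 ^ n" by (metis of_nat_le_iff of_nat_mult of_nat_numeral of_nat_power)
  then have "ln (2 * real n) \<le> ln (2 ^ n)" using n(1) by (subst ln_le_cancel_iff) auto
  then have "ln (2 * real n) \<le> n * ln 2" by (simp add: ln_realpow)
  then have "n * ln 2 \<le> ln (4 ^ n / (2 * real n))"
    using n(1) by (simp add: ln_div ln_realpow ln_realpow[of 2 2, simplified])
  also have "\<dots> \<le> ln (real (2 * n choose n))"
    using central_binomial_lower_bound[of n] n(1) by (subst ln_le_cancel_iff) auto
  also have "\<dots> \<le> chebyshev_psi (2 * n)" by (rule ln_central_binomial_le_psi)
  also have "\<dots> \<le> prime_pi (real (2 * n)) * ln (2 * n)"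
    using chebyshev_psi_le[of "2 * n"] n(1) by simp
  finally have lower: "n * ln 2 / ln (2 * real n) \<le> prime_pi (2 * real n)"
    using n(1) by (simp add: divide_le_eq)
  have "ln 2 / 4 * x / ln x \<le> n * ln 2 / ln x"
    using n assms by (intro divide_right_mono) auto
  also have "\<dots> \<le> n * ln 2 / ln (2 * real n)"
  proof (rule divide_left_mono)
    show "ln (2 * real n) \<le> ln x" using n by (subst ln_le_cancel_iff) auto
    have "ln (2 * real n) > 0" using n(1) by simp
    then show "0 < ln x * ln (2 * real n)" using assms by simp
  qed (use n in auto)
  also have "\<dots> \<le> prime_pi x"
    using lower prime_pi_mono[OF n(2)] by simp
  finally show ?thesis .
qed

section \<open>Sums of reciprocals of primes\<close>

lemma prime_recip_sum_pow2_le: "prime_recip_sum (2 ^ K) \<le> 8 * harm K"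
proof (induction K)
  case 0
  have "primes_upto 1 = {}" unfolding primes_upto_def by (auto dest: prime_gt_1_nat)
  then show ?case by (simp add: prime_recip_sum_def harm_def)
next
  case (Suc K)
  let ?B = "primes_between (2 ^ K) (2 ^ Suc K)"
  have "(\<Sum>p\<in>?B. 1 / real p) \<le> real (card ?B) * (1 / 2 ^ K)"
    by (rule sum_bounded_above) (auto simp: primes_between_def frac_le)
  also have "\<dots> \<le> prime_pi (2 ^ Suc K) * (1 / 2 ^ K)"
    using prime_pi_split[of "2 ^ K" "2 ^ Suc K"] prime_pi_mono[of 0 "2 ^ K"]
    by (intro mult_right_mono) (auto simp: prime_pi_def)
  also have "\<dots> \<le> (4 * 2 ^ Suc K / Suc K) * (1 / 2 ^ K)"
    using prime_pi_pow2_le[of "Suc K"] by (intro mult_right_mono) auto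
  also have "\<dots> = 8 / Suc K" by simp
  finally have "(\<Sum>p\<in>?B. 1 / real p) \<le> 8 / Suc K" .
  moreover have "prime_recip_sum (2 ^ Suc K) = prime_recip_sum (2 ^ K) + (\<Sum>p\<in>?B. 1 / real p)"
    by (rule prime_recip_sum_split) simp
  ultimately have "prime_recip_sum (2 ^ Suc K) \<le> 8 * harm K + 8 / Suc K"
    using Suc.IH by linarith
  also have "\<dots> = 8 * harm (Suc K)" by (simp add: harm_Suc field_simps)
  finally show ?case .
qed

lemma prime_recip_sum_le:
  assumes "x \<ge> 2"
  shows "prime_recip_sum x \<le> 8 * ln (ln x) + 24"
proof -
  obtain j :: nat where j: "2 ^ j \<le> x" "x < 2 ^ (j + 1)"
    using power_ivl_realE[of x 2] assms by auto
  have lnx: "ln x > 0" using assms by simp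
  have "real j * (2 / 3) \<le> real j * ln 2" using ln2_ge_two_thirds by (intro mult_left_mono) auto
  also have "\<dots> = ln (2 ^ j)" by (simp add: ln_realpow)
  also have "\<dots> \<le> ln x" using j assms by (subst ln_le_cancel_iff) auto
  finally have "real (j + 1) \<le> 3 * ln x"
    using j assms by (cases "j = 0") auto
  then have "ln (real (j + 1)) \<le> ln (3 * ln x)"
    using lnx by (subst ln_le_cancel_iff) auto
  also have "\<dots> = ln 3 + ln (ln x)" using lnx by (simp add: ln_mult)
  finally have "ln (real (j + 1)) \<le> ln 3 + ln (ln x)" .
  have "prime_recip_sum x \<le> prime_recip_sum (2 ^ (j + 1))"
    using j by (intro prime_recip_sum_mono) simp
  also have "\<dots> \<le> 8 * harm (j + 1)" by (rule prime_recip_sum_pow2_le)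
  also have "harm (j + 1) \<le> ln (real (j + 1)) + 1"
    using euler_mascheroni_sequence_decreasing[of 1 "j + 1"] by (simp add: harm_def)
  finally show ?thesis
    using \<open>ln (real (j + 1)) \<le> ln 3 + ln (ln x)\<close> ln_le_minus_one[of 3] by simp
qed

lemma prime_recip_sum_power_le_ln_ln:
  assumes "x \<ge> 2" "ln (ln x) \<ge> 1" "j \<le> n"
  shows "prime_recip_sum x ^ j \<le> 32 ^ n * ln (ln x) ^ n"
proof -
  have "prime_recip_sum x \<le> 32 * ln (ln x)" using prime_recip_sum_le[of x] assms by simp
  then have "prime_recip_sum x ^ j \<le> (32 * ln (ln x)) ^ j"
    using prime_recip_sum_nonneg by (intro power_mono) auto
  also have "\<dots> \<le> (32 * ln (ln x)) ^ n" using assms by (intro power_increasing) auto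
  finally show ?thesis by (simp add: power_mult_distrib)
qed

text \<open>For large \<open>K\<close> the lower Chebyshev bound at \<open>K y\<close> beats the upper one at \<open>y\<close>,
  so \<open>(y, K y]\<close> contains at least \<open>y / ln y\<close> primes.\<close>

lemma recip_sum_primes_between_ge:
  fixes K :: nat and y :: real
  assumes K: "ln 2 * K \<ge> 72" and y: "K \<le> y"
  shows "(\<Sum>p\<in>primes_between y (K * y). 1 / real p) \<ge> 1 / (K * ln y)"
proof -
  have K2: "real K \<ge> 2"
    using K ln_2_less_1 mult_right_mono[of "ln 2" 1 "real K"] by linarith
  then have y2: "y \<ge> 2" and lny: "ln y > 0" using y by auto
  have lnKy: "ln (K * y) \<le> 2 * ln y"
    using K2 y ln_le_cancel_iff[of K y] by (simp add: ln_mult)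
  have Ky: "y \<le> K * y" using K2 y2 by simp
  then have "ln (K * y) > 0" using y2 by (intro ln_gt_zero) linarith
  let ?B = "primes_between y (K * y)"
  have "ln 2 / 4 * (K * y) / (2 * ln y) \<le> ln 2 / 4 * (K * y) / ln (K * y)"
    using lnKy K2 y2 lny \<open>ln (K * y) > 0\<close> by (intro divide_left_mono) auto
  also have "\<dots> \<le> prime_pi (K * y)" using prime_pi_ge[of "K * y"] Ky y2 by simp
  also have "\<dots> = prime_pi y + real (card ?B)" by (rule prime_pi_split[OF Ky])
  also have "prime_pi y \<le> 8 * y / ln y" using prime_pi_le y2 by simp
  finally have "(ln 2 * K / 8 - 8) * (y / ln y) \<le> real (card ?B)"
    using lny by (simp add: field_simps)
  moreover have "1 * (y / ln y) \<le> (ln 2 * K / 8 - 8) * (y / ln y)"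
    using K y2 lny by (intro mult_right_mono) auto
  ultimately have card: "y / ln y \<le> real (card ?B)" by linarith
  have "real (card ?B) * (1 / (K * y)) \<le> (\<Sum>p\<in>?B. 1 / real p)"
    using y2 by (intro sum_bounded_below) (auto simp: primes_between_def frac_le)
  moreover have "y / ln y * (1 / (K * y)) \<le> real (card ?B) * (1 / (K * y))"
    using card K2 y2 by (intro mult_right_mono) auto
  moreover have "y / ln y * (1 / (K * y)) = 1 / (K * ln y)" using y2 K2 by (simp add: field_simps)
  ultimately show ?thesis by linarith
qed

lemma prime_recip_sum_Kadic_ge:
  fixes K :: nat
  assumes K: "ln 2 * K \<ge> 72"
  shows "prime_recip_sum (real K ^ (J + 1)) \<ge> harm J / (K * ln K)"
proof (induction J)
  case 0
  then show ?case using prime_recip_sum_nonneg by (simp add: harm_def)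
next
  case (Suc J)
  have K2: "real K \<ge> 2"
    using K ln_2_less_1 mult_right_mono[of "ln 2" 1 "real K"] by linarith
  let ?y = "real K ^ (J + 1)"
  have y: "real K \<le> ?y" using K2 by (simp add: self_le_power)
  have "ln ?y = real (J + 1) * ln K" by (rule ln_realpow)
  then have "harm (Suc J) / (K * ln K) = harm J / (K * ln K) + 1 / (K * ln ?y)"
    by (simp add: harm_Suc add_divide_distrib inverse_eq_divide mult_ac)
  also have "\<dots> \<le> prime_recip_sum ?y + (\<Sum>p\<in>primes_between ?y (K * ?y). 1 / real p)"
    using Suc.IH recip_sum_primes_between_ge[OF K y] by linarith
  also have "\<dots> = prime_recip_sum (K * ?y)"
    using K2 y by (subst prime_recip_sum_split[of ?y "K * ?y"]) auto
  also have "K * ?y = real K ^ (Suc J + 1)" by simp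
  finally show ?case .
qed

lemma prime_recip_sum_ge_eventually:
  "\<exists>a>0. eventually (\<lambda>x. prime_recip_sum x \<ge> a * ln (ln x)) at_top"
proof -
  define K :: nat where "K = 108"
  have K: "ln 2 * K \<ge> 72" using ln2_ge_two_thirds by (simp add: K_def)
  have K2: "real K \<ge> 2" and lnK: "ln K > 0" by (simp_all add: K_def)
  define c where "c = ln (2 * ln K)"
  have "eventually (\<lambda>x. x \<ge> real K ^ 2 \<and> ln (ln x) \<ge> 2 * c) at_top"
    by (intro eventually_conj eventually_ge_at_top) real_asymp
  then have "eventually (\<lambda>x. prime_recip_sum x \<ge> 1 / (2 * K * ln K) * ln (ln x)) at_top"
  proof eventually_elim
    case (elim x)
    have "real K ^ 2 \<ge> 4" by (simp add: K_def)
    then have x4: "x \<ge> 4" using elim by linarith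
    obtain J' :: nat where J': "real K ^ J' \<le> x" "x < real K ^ (J' + 1)"
      using power_ivl_realE[of x K] x4 K2 by auto
    have "real K ^ 2 < real K ^ (J' + 1)" using elim J' by linarith
    then have "2 < J' + 1" using K2 by (subst (asm) power_strict_increasing_iff) auto
    define J where "J = J' - 1"
    have J: "J' = J + 1" "J \<ge> 1" using \<open>2 < J' + 1\<close> by (simp_all add: J_def)
    have lnx: "ln x > 0" using x4 by simp
    have "ln x < ln (real K ^ (J + 2))" using J' J x4 by (subst ln_less_cancel_iff) auto
    also have "\<dots> = (J + 2) * ln K" by (rule ln_realpow)
    also have "\<dots> \<le> (2 * (real J + 1)) * ln K" using lnK J by (intro mult_right_mono) auto
    finally have "ln x / (2 * ln K) < real J + 1" using lnK by (simp add: field_simps)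
    then have "ln (ln x / (2 * ln K)) \<le> ln (real J + 1)"
      using lnx lnK by (subst ln_le_cancel_iff) auto
    then have "ln (ln x) - c \<le> ln (real J + 1)"
      using lnx lnK by (simp add: c_def ln_div)
    also have "\<dots> \<le> harm J" by (rule harm_ge_ln)
    finally have "ln (ln x) / 2 / (K * ln K) \<le> harm J / (K * ln K)"
      using elim K2 lnK by (intro divide_right_mono) auto
    also have "\<dots> \<le> prime_recip_sum (real K ^ (J + 1))" by (rule prime_recip_sum_Kadic_ge[OF K])
    also have "\<dots> \<le> prime_recip_sum x" using J' J by (intro prime_recip_sum_mono) simp
    finally show ?case by simp
  qed
  then show ?thesis using K2 lnK by (intro exI[of _ "1 / (2 * K * ln K)"]) simp
qed

section \<open>Numbers with a given number of prime factors\<close>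

definition prime_factor_count :: "nat \<Rightarrow> nat" where
  "prime_factor_count n = size (prime_factorization n)"

definition factor_count_eq_upto :: "nat \<Rightarrow> real \<Rightarrow> nat set" where
  "factor_count_eq_upto k x = {n. 0 < n \<and> real n \<le> x \<and> prime_factor_count n = k}"

definition smooth_factor_count_eq :: "nat \<Rightarrow> real \<Rightarrow> nat set" where
  "smooth_factor_count_eq k y =
    {m. 0 < m \<and> prime_factor_count m = k \<and> (\<forall>p\<in>prime_factors m. real p \<le> y)}"

lemma almost_primes_prime_factor_count: "almost_primes l = {n. 0 < n \<and> prime_factor_count n \<le> l}"
  unfolding almost_primes_def prime_factor_count_def ..

lemma prime_factor_count_mult_prime:
  "prime p \<Longrightarrow> m > 0 \<Longrightarrow> prime_factor_count (p * m) = prime_factor_count m + 1"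
  unfolding prime_factor_count_def by (simp add: prime_factorization_times_prime)

lemma prime_factor_count_eq_0_iff: "n > 0 \<Longrightarrow> prime_factor_count n = 0 \<longleftrightarrow> n = 1"
  unfolding prime_factor_count_def using prime_factorization_empty_iff[of n] by auto

lemma card_prime_factors_le_prime_factor_count: "card (prime_factors n) \<le> prime_factor_count n"
  unfolding prime_factor_count_def by (metis size_mset_set size_mset_mono mset_set_set_mset_msubset)

lemma prod_mset_le_power_size:
  fixes M :: "nat multiset" and y :: real
  assumes "\<And>p. p \<in># M \<Longrightarrow> real p \<le> y"
  shows "real (prod_mset M) \<le> y ^ size M"
  using assms
proof (induction M)
  case (add p M)
  then have "real p * real (prod_mset M) \<le> y * y ^ size M"
    by (intro mult_mono) (auto intro: order.trans[OF of_nat_0_le_iff])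
  then show ?case by simp
qed simp

lemma le_power_prime_factor_count:
  assumes "n > 0" "\<And>p. p \<in> prime_factors n \<Longrightarrow> real p \<le> y"
  shows "real n \<le> y ^ prime_factor_count n"
  using prod_mset_le_power_size[of "prime_factorization n" y] assms
  by (simp add: prime_factor_count_def)

lemma finite_factor_count_eq_upto [simp]: "finite (factor_count_eq_upto k x)"
  by (rule finite_subset[of _ "{..nat \<lfloor>x\<rfloor>}"]) (auto simp: factor_count_eq_upto_def le_nat_floor)

lemma finite_smooth_factor_count_eq [simp]: "finite (smooth_factor_count_eq k y)"
proof (rule finite_subset[of _ "{..nat \<lfloor>y ^ k\<rfloor>}"])
  show "smooth_factor_count_eq k y \<subseteq> {..nat \<lfloor>y ^ k\<rfloor>}"
    using le_power_prime_factor_count by (force simp: smooth_factor_count_eq_def le_nat_floor)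
qed simp

lemma factor_count_eq_upto_0: "factor_count_eq_upto 0 x \<subseteq> {1}"
  by (auto simp: factor_count_eq_upto_def prime_factor_count_eq_0_iff)

lemma factor_count_eq_upto_Suc_decompose:
  assumes n: "n \<in> factor_count_eq_upto (Suc k) x"
  defines "p \<equiv> aprimedivisor n"
  shows "n = p * (n div p)" and "p \<in> primes_upto x" and "n div p \<in> factor_count_eq_upto k x"
proof -
  have n0: "n > 0" "real n \<le> x" "prime_factor_count n = Suc k"
    using n by (auto simp: factor_count_eq_upto_def)
  then have "n \<noteq> Suc 0" by (auto simp: prime_factor_count_def)
  then have p: "prime p" "p dvd n" using aprimedivisor_nat[of n] by (simp_all add: p_def)
  then show nm: "n = p * (n div p)" by simp
  then have m0: "n div p > 0" using n0 by (metis gr0I mult_0_right)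
  have "real p \<le> real n" "real (n div p) \<le> real n" using p n0 by (auto simp: dvd_imp_le)
  then have le_x: "real p \<le> x" "real (n div p) \<le> x" using n0 by linarith+
  then show "p \<in> primes_upto x" using p by (simp add: primes_upto_def)
  have "prime_factor_count (n div p) = k"
    using prime_factor_count_mult_prime[OF p(1) m0] nm n0 by simp
  then show "n div p \<in> factor_count_eq_upto k x"
    using m0 le_x by (simp add: factor_count_eq_upto_def)
qed

lemma sum_recip_factor_count_eq_upto_le:
  "(\<Sum>n\<in>factor_count_eq_upto k x. 1 / real n) \<le> prime_recip_sum x ^ k"
proof (induction k)
  case 0
  have "(\<Sum>n\<in>factor_count_eq_upto 0 x. 1 / real n) \<le> (\<Sum>n\<in>{1::nat}. 1 / real n)"
    by (intro sum_mono2 factor_count_eq_upto_0) auto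
  then show ?case by simp
next
  case (Suc k)
  let ?S = "factor_count_eq_upto (Suc k) x"
  let ?T = "primes_upto x \<times> factor_count_eq_upto k x"
  let ?w = "\<lambda>(p, m). 1 / (real p * real m)"
  define g where "g n = (aprimedivisor n, n div aprimedivisor n)" for n :: nat
  note decompose = factor_count_eq_upto_Suc_decompose
  have inj: "inj_on g ?S" by (rule inj_onI) (metis g_def prod.inject decompose(1))
  have "(\<Sum>n\<in>?S. 1 / real n) = (\<Sum>n\<in>?S. ?w (g n))"
    using decompose(1) by (intro sum.cong refl) (metis g_def case_prod_conv of_nat_mult)
  also have "\<dots> = (\<Sum>z\<in>g ` ?S. ?w z)" by (simp add: sum.reindex[OF inj])
  also have "\<dots> \<le> (\<Sum>z\<in>?T. ?w z)"
    using decompose(2,3) by (intro sum_mono2) (auto simp: g_def)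
  also have "\<dots> = prime_recip_sum x * (\<Sum>m\<in>factor_count_eq_upto k x. 1 / real m)"
    by (simp add: prime_recip_sum_def sum_product sum.cartesian_product)
  also have "\<dots> \<le> prime_recip_sum x ^ Suc k"
    using Suc.IH prime_recip_sum_nonneg by (simp add: mult_left_mono)
  finally show ?case .
qed

text \<open>Every \<open>n\<close> has at most \<open>prime_factor_count n\<close> factorisations \<open>n = m q\<close> with \<open>q\<close> prime.\<close>

lemma sum_mult_prime_le_prime_factor_count:
  fixes w :: "nat \<Rightarrow> real"
  assumes "finite A" "finite B"
    and A: "\<And>m q. (m, q) \<in> A \<Longrightarrow> m > 0 \<and> prime q \<and> m * q \<in> B"
    and B: "\<And>n. n \<in> B \<Longrightarrow> prime_factor_count n \<le> k \<and> w n \<ge> 0"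
  shows "(\<Sum>(m, q)\<in>A. w (m * q)) \<le> k * (\<Sum>n\<in>B. w n)"
proof -
  let ?h = "\<lambda>(m, q). m * q :: nat"
  have fiber: "card {a \<in> A. ?h a = n} \<le> k" if "n \<in> B" for n
  proof -
    have "{a \<in> A. ?h a = n} \<subseteq> (\<lambda>q. (n div q, q)) ` prime_factors n"
    proof
      fix a assume "a \<in> {a \<in> A. ?h a = n}"
      moreover obtain m q where "a = (m, q)" by (cases a)
      ultimately have "a = (n div q, q)" "q \<in> prime_factors n"
        using A by (auto simp: in_prime_factors_iff prime_gt_0_nat)
      then show "a \<in> (\<lambda>q. (n div q, q)) ` prime_factors n" by blast
    qed
    then have "card {a \<in> A. ?h a = n} \<le> card ((\<lambda>q. (n div q, q)) ` prime_factors n)"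
      by (intro card_mono) auto
    also have "\<dots> \<le> card (prime_factors n)" by (rule card_image_le) simp
    also have "\<dots> \<le> k" using card_prime_factors_le_prime_factor_count[of n] B[OF that] by linarith
    finally show ?thesis .
  qed
  have "(\<Sum>a\<in>A. w (?h a)) = (\<Sum>n\<in>B. \<Sum>a\<in>{a \<in> A. ?h a = n}. w (?h a))"
    using assms by (intro sum.group[symmetric]) auto
  also have "\<dots> = (\<Sum>n\<in>B. real (card {a \<in> A. ?h a = n}) * w n)" by simp
  also have "\<dots> \<le> (\<Sum>n\<in>B. k * w n)"
    using fiber B by (intro sum_mono mult_right_mono) auto
  finally show ?thesis by (simp add: sum_distrib_left case_prod_unfold)
qed

lemma prime_recip_sum_power_le_smooth_sum:
  "prime_recip_sum y ^ k \<le> fact k * (\<Sum>m\<in>smooth_factor_count_eq k y. 1 / real m)"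
proof (induction k)
  case 0
  have "smooth_factor_count_eq 0 y = {1}"
    by (auto simp: smooth_factor_count_eq_def prime_factor_count_eq_0_iff)
  then show ?case by simp
next
  case (Suc k)
  let ?V = "smooth_factor_count_eq k y"
  have "prime_recip_sum y ^ Suc k \<le> fact k * (\<Sum>m\<in>?V. 1 / real m) * prime_recip_sum y"
    using mult_left_mono[OF Suc.IH prime_recip_sum_nonneg] by (simp add: mult_ac)
  also have "\<dots> = fact k * (\<Sum>(m, q)\<in>?V \<times> primes_upto y. 1 / real (m * q))"
    by (simp add: prime_recip_sum_def sum_product sum.cartesian_product mult.assoc)
  also have "(\<Sum>(m, q)\<in>?V \<times> primes_upto y. 1 / real (m * q))
      \<le> Suc k * (\<Sum>n\<in>smooth_factor_count_eq (Suc k) y. 1 / real n)"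
  proof (rule sum_mult_prime_le_prime_factor_count)
    fix m q assume "(m, q) \<in> ?V \<times> primes_upto y"
    then have m: "m > 0" "prime_factor_count m = k" "\<forall>p\<in>prime_factors m. real p \<le> y"
      and q: "prime q" "real q \<le> y"
      by (auto simp: smooth_factor_count_eq_def primes_upto_def)
    have "prime_factors (m * q) = prime_factors m \<union> {q}"
      using m q by (simp add: prime_factorization_mult prime_gt_0_nat prime_factorization_prime)
    then show "m > 0 \<and> prime q \<and> m * q \<in> smooth_factor_count_eq (Suc k) y"
      using m q prime_factor_count_mult_prime[OF q(1) m(1)]
      by (auto simp: smooth_factor_count_eq_def mult.commute prime_gt_0_nat)
  qed (simp, simp, simp add: smooth_factor_count_eq_def)
  then have "fact k * (\<Sum>(m, q)\<in>?V \<times> primes_upto y. 1 / real (m * q))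
      \<le> fact (Suc k) * (\<Sum>n\<in>smooth_factor_count_eq (Suc k) y. 1 / real n)"
    by (simp add: mult_left_mono mult.assoc)
  finally show ?case .
qed

lemma prime_pi_quotient_ge:
  fixes x m :: real
  assumes x: "x \<ge> 4" and m: "1 \<le> m" "m \<le> sqrt x"
  shows "ln 2 / 4 * x / ln x * (1 / m) \<le> prime_pi (x / m)"
proof -
  have sqrt2: "sqrt x \<ge> 2" using x by (auto simp: real_le_rsqrt)
  have "sqrt x * m \<le> sqrt x * sqrt x" using m sqrt2 x by (intro mult_left_mono) auto
  then have xm: "x / m \<ge> sqrt x" using m x by (simp add: le_divide_eq)
  have "x / m \<le> x" using m sqrt2 x by (simp add: divide_le_eq mult_le_cancel_left1)
  then have "ln (x / m) \<le> ln x" using xm sqrt2 by (subst ln_le_cancel_iff) auto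
  moreover have "ln (x / m) > 0" using xm sqrt2 by (intro ln_gt_zero) linarith
  ultimately have "ln 2 / 4 * (x / m) / ln x \<le> ln 2 / 4 * (x / m) / ln (x / m)"
    using x m by (intro divide_left_mono) auto
  also have "\<dots> \<le> prime_pi (x / m)" using prime_pi_ge[of "x / m"] xm sqrt2 by linarith
  finally show ?thesis by (simp add: mult_ac)
qed

lemma card_factor_count_eq_upto_ge:
  assumes l: "l \<ge> 1" and y: "y ^ l \<le> sqrt x" "y \<ge> 1" and x: "x \<ge> 4"
  shows "ln 2 / 4 * x / ln x * (\<Sum>m\<in>smooth_factor_count_eq (l - 1) y. 1 / real m)
    \<le> l * card (factor_count_eq_upto l x)"
proof -
  let ?V = "smooth_factor_count_eq (l - 1) y"
  let ?Q = "SIGMA m:?V. primes_upto (x / m)"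
  have m_le: "real m \<le> sqrt x" and m0: "m > 0" if "m \<in> ?V" for m
  proof -
    have "real m \<le> y ^ (l - 1)"
      using that le_power_prime_factor_count[of m y] by (auto simp: smooth_factor_count_eq_def)
    also have "\<dots> \<le> y ^ l" using y by (intro power_increasing) auto
    finally show "real m \<le> sqrt x" using y by linarith
    show "m > 0" using that by (simp add: smooth_factor_count_eq_def)
  qed
  have "ln 2 / 4 * x / ln x * (\<Sum>m\<in>?V. 1 / real m) = (\<Sum>m\<in>?V. ln 2 / 4 * x / ln x * (1 / m))"
    by (rule sum_distrib_left)
  also have "\<dots> \<le> (\<Sum>m\<in>?V. prime_pi (x / m))"
    using m_le m0 x by (intro sum_mono prime_pi_quotient_ge) (auto simp: Suc_le_eq)
  also have "\<dots> = (\<Sum>(m, q)\<in>?Q. (\<lambda>_. 1) (m * q))"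
    by (simp add: prime_pi_def sum.Sigma[symmetric])
  also have "\<dots> \<le> real l * (\<Sum>n\<in>factor_count_eq_upto l x. 1)"
  proof (rule sum_mult_prime_le_prime_factor_count[where w = "\<lambda>_. 1"])
    fix m q assume "(m, q) \<in> ?Q"
    then have m: "m \<in> ?V" and q: "prime q" "real q \<le> x / m" by (auto simp: primes_upto_def)
    have "real (m * q) = real m * real q" by simp
    also have "\<dots> \<le> real m * (x / m)" using q by (intro mult_left_mono) auto
    also have "\<dots> = x" using m0[OF m] by simp
    finally have "real (m * q) \<le> x" .
    moreover have "prime_factor_count (m * q) = l"
      using prime_factor_count_mult_prime[OF q(1) m0[OF m]] m l
      by (simp add: smooth_factor_count_eq_def mult.commute)
    ultimately show "m > 0 \<and> prime q \<and> m * q \<in> factor_count_eq_upto l x"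
      using m0[OF m] q by (simp add: factor_count_eq_upto_def prime_gt_0_nat)
  qed ((rule finite_SigmaI; simp), simp, simp add: factor_count_eq_upto_def)
  finally show ?thesis by simp
qed

lemma card_primes_between_le:
  assumes z: "z \<ge> 2" and w: "w \<ge> 0"
  shows "real (card (primes_between z w)) \<le> 8 * w / ln z"
proof (cases "z < w")
  case True
  have "real (card (primes_between z w)) \<le> prime_pi w"
    using prime_pi_split[of z w] True prime_pi_def by simp
  also have "\<dots> \<le> 8 * w / ln w" using prime_pi_le True z by simp
  also have "\<dots> \<le> 8 * w / ln z" using True z by (intro divide_left_mono) auto
  finally show ?thesis .
next
  case False
  then have "primes_between z w = {}" by (auto simp: primes_between_def)
  then show ?thesis using z w by simp
qed

lemma Max_prime_factors_gt:
  assumes "n > 0" "real n > z ^ prime_factor_count n"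
  shows "Max (prime_factors n) \<in> prime_factors n" "real (Max (prime_factors n)) > z"
proof -
  obtain p where p: "p \<in> prime_factors n" "real p > z"
    using le_power_prime_factor_count[of n z] assms by force
  then show "Max (prime_factors n) \<in> prime_factors n" by (auto intro: Max_in)
  have "p \<le> Max (prime_factors n)" using p by simp
  then show "real (Max (prime_factors n)) > z" using p by linarith
qed

text \<open>A number \<open>n > z\<^sup>k\<close> with \<open>k\<close> prime factors has a prime factor \<open>q > z\<close>, so
  \<open>n = m q\<close> with \<open>m\<close> having \<open>k - 1\<close> prime factors and \<open>z < q \<le> x / m\<close>.\<close>

lemma card_factor_count_eq_upto_above_le:
  assumes "z > 0"
  shows "card {n \<in> factor_count_eq_upto k x. real n > z ^ k}
    \<le> (\<Sum>m\<in>factor_count_eq_upto (k - 1) x. card (primes_between z (x / m)))"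
proof -
  let ?S = "{n \<in> factor_count_eq_upto k x. real n > z ^ k}"
  let ?T = "SIGMA m:factor_count_eq_upto (k - 1) x. primes_between z (x / m)"
  define P where "P n = Max (prime_factors n)" for n :: nat
  have P: "prime (P n) \<and> P n dvd n \<and> real (P n) > z" if "n \<in> ?S" for n
    using that Max_prime_factors_gt[of n z]
    by (auto simp: P_def factor_count_eq_upto_def in_prime_factors_iff)
  define f where "f n = (n div P n, P n)" for n
  have "inj_on f ?S"
  proof (rule inj_onI)
    fix a b assume "a \<in> ?S" "b \<in> ?S" "f a = f b"
    then show "a = b" using P[of a] P[of b] by (simp add: f_def) (metis dvd_div_mult_self)
  qed
  moreover have "f ` ?S \<subseteq> ?T"
  proof
    fix w assume "w \<in> f ` ?S"
    then obtain n where n: "n \<in> ?S" "w = f n" by blast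
    define m where "m = n div P n"
    have n0: "n > 0" "real n \<le> x" "prime_factor_count n = k"
      using n by (auto simp: factor_count_eq_upto_def)
    have p: "prime (P n)" "real (P n) > z" and nm: "n = P n * m"
      using P[OF n(1)] by (auto simp: m_def)
    then have m0: "m > 0" using n0 by (metis gr0I mult_0_right)
    have "real m \<le> real n" by (simp add: m_def)
    moreover have "real (P n) * real m \<le> x" using nm n0 by (simp flip: of_nat_mult)
    moreover have "prime_factor_count m = k - 1"
      using prime_factor_count_mult_prime[OF p(1) m0] nm n0 by simp
    ultimately show "w \<in> ?T"
      using n p m0 n0 by (auto simp: f_def m_def[symmetric] factor_count_eq_upto_def
          primes_between_def pos_le_divide_eq)
  qed
  ultimately have "card ?S \<le> card ?T"
    using card_mono[of ?T "f ` ?S"] by (simp add: card_image finite_SigmaI)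
  also have "card ?T = (\<Sum>m\<in>factor_count_eq_upto (k - 1) x. card (primes_between z (x / m)))"
    by (rule card_SigmaI) auto
  finally show ?thesis .
qed

lemma
  fixes x :: real and k :: nat
  assumes "x > 0" "k \<ge> 1"
  shows power_powr_inverse_double: "(x powr (1 / (2 * real k))) ^ k = sqrt x"
    and ln_powr_inverse_double: "ln (x powr (1 / (2 * real k))) = ln x / (2 * real k)"
proof -
  have "(x powr (1 / (2 * real k))) ^ k = x powr (1 / (2 * real k) * k)"
    using assms by (simp add: powr_powr powr_realpow [symmetric])
  then show "(x powr (1 / (2 * real k))) ^ k = sqrt x" using assms by (simp add: powr_half_sqrt)
  show "ln (x powr (1 / (2 * real k))) = ln x / (2 * real k)" using assms by (simp add: ln_powr)
qed

lemma card_factor_count_eq_upto_le: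
  assumes k: "k \<ge> 1" and x: "x \<ge> 4 ^ k"
  shows "card (factor_count_eq_upto k x)
    \<le> sqrt x + 16 * real k * x / ln x * prime_recip_sum x ^ (k - 1)"
proof -
  have "(4::real) ^ 1 \<le> 4 ^ k" using k by (intro power_increasing) auto
  then have x4: "x \<ge> 4" using x by simp
  then have lnx: "ln x > 0" by simp
  define z where "z = x powr (1 / (2 * real k))"
  have z0: "z > 0" using x4 by (simp add: z_def)
  have zk: "z ^ k = sqrt x" and lnz: "ln z = ln x / (2 * real k)"
    unfolding z_def using x4 k by (intro power_powr_inverse_double ln_powr_inverse_double; simp)+
  have "(2 ^ k) ^ 2 = (4::real) ^ k" by (simp add: power2_eq_square power_mult_distrib [symmetric])
  then have "(2 ^ k) ^ 2 \<le> x" using x by simp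
  then have "2 ^ Suc (k - 1) \<le> z ^ Suc (k - 1)" using zk k by (simp add: real_le_rsqrt)
  then have z2: "z \<ge> 2" by (rule power_le_imp_le_base) (use z0 in simp)
  let ?S = "factor_count_eq_upto k x"
  have "?S = {n \<in> ?S. real n \<le> sqrt x} \<union> {n \<in> ?S. real n > z ^ k}" using zk by auto
  then have "card ?S \<le> card {n \<in> ?S. real n \<le> sqrt x} + card {n \<in> ?S. real n > z ^ k}"
    by (metis card_Un_le)
  moreover have "card {n \<in> ?S. real n \<le> sqrt x} \<le> nat \<lfloor>sqrt x\<rfloor>"
    using card_mono[of "{1..nat \<lfloor>sqrt x\<rfloor>}" "{n \<in> ?S. real n \<le> sqrt x}"]
    by (force simp: factor_count_eq_upto_def le_nat_floor)
  moreover have "real (card {n \<in> ?S. real n > z ^ k})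
      \<le> (\<Sum>m\<in>factor_count_eq_upto (k - 1) x. real (card (primes_between z (x / m))))"
    using card_factor_count_eq_upto_above_le[OF z0, of k x] by (simp flip: of_nat_sum)
  moreover have "\<dots> \<le> (\<Sum>m\<in>factor_count_eq_upto (k - 1) x. 16 * real k * x / ln x * (1 / m))"
  proof (rule sum_mono)
    fix m assume "m \<in> factor_count_eq_upto (k - 1) x"
    then have "real m > 0" by (simp add: factor_count_eq_upto_def)
    then have "real (card (primes_between z (x / m))) \<le> 8 * (x / m) / ln z"
      using z2 x4 by (intro card_primes_between_le) auto
    also have "\<dots> = 16 * real k * x / ln x * (1 / m)"
      unfolding lnz using k lnx \<open>real m > 0\<close> by (simp add: field_simps)
    finally show "real (card (primes_between z (x / m))) \<le> 16 * real k * x / ln x * (1 / m)" .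
  qed
  moreover have "\<dots> = 16 * real k * x / ln x * (\<Sum>m\<in>factor_count_eq_upto (k - 1) x. 1 / m)"
    by (rule sum_distrib_left [symmetric])
  moreover have "\<dots> \<le> 16 * real k * x / ln x * prime_recip_sum x ^ (k - 1)"
    using sum_recip_factor_count_eq_upto_le[of "k - 1" x] x4 lnx by (intro mult_left_mono) auto
  moreover have "real (nat \<lfloor>sqrt x\<rfloor>) \<le> sqrt x" using x4 by simp
  ultimately show ?thesis by linarith
qed

section \<open>Tails of Dirichlet series over almost primes\<close>

lemma sum_recip_powr_block_le:
  fixes A G :: "nat set" and s y B :: real
  assumes s: "s \<ge> 0" and y: "y > 0"
    and G: "G \<subseteq> {k \<in> A. y \<le> real k \<and> real k \<le> 2 * y}"
    and count: "real (card {k \<in> A. real k \<le> 2 * y}) \<le> B * (2 * y)"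
  shows "(\<Sum>k\<in>G. 1 / real k powr s) \<le> 2 * B * y powr (1 - s)"
proof -
  have "finite {k \<in> A. real k \<le> 2 * y}"
    by (rule finite_subset[of _ "{..nat \<lfloor>2 * y\<rfloor>}"]) (auto simp: le_nat_floor)
  then have "card G \<le> card {k \<in> A. real k \<le> 2 * y}" by (rule card_mono) (use G in auto)
  then have card: "real (card G) \<le> B * (2 * y)" using count by linarith
  have "(\<Sum>k\<in>G. 1 / real k powr s) \<le> real (card G) * (1 / y powr s)"
  proof (rule sum_bounded_above)
    fix k assume "k \<in> G"
    then show "1 / real k powr s \<le> 1 / y powr s"
      using G y s by (intro divide_left_mono powr_mono2 mult_pos_pos) auto
  qed
  also have "\<dots> \<le> B * (2 * y) * (1 / y powr s)" using card by (intro mult_right_mono) auto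
  also have "\<dots> = 2 * B * y powr (1 - s)" using y by (simp add: powr_diff)
  finally show ?thesis .
qed

lemma ex_dyadic_block:
  fixes M t :: real
  assumes "M > 0" "M \<le> t"
  shows "\<exists>j :: nat. 2 ^ j * M \<le> t \<and> t < 2 * (2 ^ j * M)"
proof -
  obtain j :: nat where "2 ^ j \<le> t / M" "t / M < 2 ^ (j + 1)"
    using power_ivl_realE[of "t / M" 2] assms by auto
  then show ?thesis using assms by (auto simp: field_simps)
qed

lemma infsum_recip_powr_tail_le:
  fixes A :: "nat set" and s M B :: real
  assumes s: "s > 1" and M: "M > 0"
    and count: "\<And>x. x \<ge> M \<Longrightarrow> real (card {k \<in> A. real k \<le> x}) \<le> B * x"
  shows "(\<lambda>k. 1 / real k powr s) summable_on {k \<in> A. real k \<ge> M}"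
    and "(\<Sum>\<^sub>\<infinity>k \<in> {k \<in> A. real k \<ge> M}. 1 / real k powr s)
      \<le> 2 * B * M powr (1 - s) / (1 - 2 powr (1 - s))"
proof -
  let ?T = "{k \<in> A. real k \<ge> M}"
  define f where "f k = 1 / real k powr s" for k :: nat
  define r :: real where "r = 2 powr (1 - s)"
  have r: "0 < r" "r < 1" using s by (auto simp: r_def intro: powr_less_one)
  have "0 \<le> B * M" using count[of M] of_nat_0_le_iff by (meson order.trans order_refl)
  then have B: "B \<ge> 0" using M by (simp add: zero_le_mult_iff)
  define idx where "idx k = (SOME j :: nat. 2 ^ j * M \<le> real k \<and> real k < 2 * (2 ^ j * M))"
    for k :: nat
  have idx: "2 ^ idx k * M \<le> real k \<and> real k < 2 * (2 ^ idx k * M)" if "k \<in> ?T" for k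
    unfolding idx_def by (rule someI_ex) (use ex_dyadic_block[OF M, of "real k"] that in auto)
  have block: "sum f {k \<in> F. idx k = i} \<le> 2 * B * M powr (1 - s) * r ^ i"
    if "F \<subseteq> ?T" for F i
  proof -
    have "(1::real) \<le> 2 * 2 ^ i" using one_le_power[of "2::real" i] by linarith
    then have "M \<le> 2 * (2 ^ i * M)" using M by (simp add: mult_le_cancel_right1)
    then have "sum f {k \<in> F. idx k = i} \<le> 2 * B * (2 ^ i * M) powr (1 - s)"
      unfolding f_def using that idx s M count
      by (intro sum_recip_powr_block_le[where A = A]) force+
    also have "(2 ^ i * M) powr (1 - s) = M powr (1 - s) * r ^ i"
      by (simp add: r_def powr_mult powr_power powr_powr powr_realpow [symmetric] mult_ac)
    finally show ?thesis by (simp add: mult_ac)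
  qed
  have finite_le: "sum f F \<le> 2 * B * M powr (1 - s) / (1 - r)" if F: "finite F" "F \<subseteq> ?T" for F
  proof -
    have "sum f F = (\<Sum>i\<in>idx ` F. sum f {k \<in> F. idx k = i})"
      using F by (intro sum.group[symmetric]) auto
    also have "\<dots> \<le> (\<Sum>i\<in>idx ` F. 2 * B * M powr (1 - s) * r ^ i)"
      using F by (intro sum_mono block) auto
    also have "\<dots> = 2 * B * M powr (1 - s) * (\<Sum>i\<in>idx ` F. r ^ i)"
      by (simp add: sum_distrib_left)
    also have "\<dots> \<le> 2 * B * M powr (1 - s) * (\<Sum>i. r ^ i)"
      using r B F by (intro mult_left_mono sum_le_suminf) auto
    also have "(\<Sum>i. r ^ i) = 1 / (1 - r)" using r by (intro suminf_geometric) simp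
    finally show ?thesis by simp
  qed
  show summable: "(\<lambda>k. 1 / real k powr s) summable_on ?T"
    using finite_le unfolding f_def by (intro nonneg_bdd_above_summable_on bdd_aboveI) auto
  show "(\<Sum>\<^sub>\<infinity>k\<in>?T. 1 / real k powr s) \<le> 2 * B * M powr (1 - s) / (1 - 2 powr (1 - s))"
    using summable finite_le unfolding f_def r_def by (intro infsum_le_finite_sums) auto
qed

lemma infsum_recip_powr_tail_ge:
  fixes A :: "nat set" and s M N :: real
  assumes s: "s \<ge> 0" and M: "M > 0"
    and summable: "(\<lambda>k. 1 / real k powr s) summable_on {k \<in> A. real k \<ge> M}"
  shows "real (card {k \<in> A. M \<le> real k \<and> real k \<le> N}) / N powr s
    \<le> (\<Sum>\<^sub>\<infinity>k \<in> {k \<in> A. real k \<ge> M}. 1 / real k powr s)"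
proof -
  let ?F = "{k \<in> A. M \<le> real k \<and> real k \<le> N}"
  have fin: "finite ?F" by (rule finite_subset[of _ "{..nat \<lfloor>N\<rfloor>}"]) (auto simp: le_nat_floor)
  have "real (card ?F) / N powr s = real (card ?F) * (1 / N powr s)" by simp
  also have "\<dots> \<le> (\<Sum>k\<in>?F. 1 / real k powr s)"
  proof (rule sum_bounded_below)
    fix k assume "k \<in> ?F"
    then show "1 / N powr s \<le> 1 / real k powr s"
      using M s by (intro divide_left_mono powr_mono2 mult_pos_pos) auto
  qed
  also have "\<dots> \<le> (\<Sum>\<^sub>\<infinity>k \<in> {k \<in> A. real k \<ge> M}. 1 / real k powr s)"
    using summable fin by (intro finite_sum_le_infsum) auto
  finally show ?thesis .
qed

lemma card_factor_count_eq_upto_le_eventually: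
  assumes "k \<le> l"
  shows "eventually (\<lambda>x. real (card (factor_count_eq_upto k x))
    \<le> (1 + 16 * real l * 32 ^ (l - 1)) * x * ln (ln x) ^ (l - 1) / ln x) at_top"
proof -
  have "eventually (\<lambda>x::real. x \<ge> 4 ^ l \<and> x \<ge> 4 \<and> ln (ln x) \<ge> 1 \<and> sqrt x \<le> x / ln x) at_top"
    by (intro eventually_conj eventually_ge_at_top) real_asymp+
  then show ?thesis
  proof eventually_elim
    case (elim x)
    define C where "C = 1 + 16 * real l * 32 ^ (l - 1)"
    define B where "B = x / ln x * ln (ln x) ^ (l - 1)"
    have lnx: "ln x > 0" using elim by simp
    have "x / ln x * 1 \<le> B"
      unfolding B_def using elim lnx by (intro mult_left_mono one_le_power) auto
    moreover have "1 \<le> sqrt x" using elim by simp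
    ultimately have sqrt_le: "sqrt x \<le> B" and one_le: "1 \<le> B" using elim by linarith+
    have "real (card (factor_count_eq_upto k x)) \<le> C * B"
    proof (cases "k = 0")
      case True
      then have "real (card (factor_count_eq_upto k x)) \<le> 1"
        using card_mono[OF _ factor_count_eq_upto_0] by fastforce
      also have "1 \<le> C * B" using one_le mult_mono[of 1 C 1 B] by (simp add: C_def)
      finally show ?thesis .
    next
      case False
      have "(4::real) ^ k \<le> 4 ^ l" using assms by (intro power_increasing) auto
      then have "4 ^ k \<le> x" using elim by linarith
      then have "real (card (factor_count_eq_upto k x))
          \<le> sqrt x + 16 * real k * x / ln x * prime_recip_sum x ^ (k - 1)"
        using False by (intro card_factor_count_eq_upto_le) auto
      also have "\<dots> \<le> B + 16 * real l * x / ln x * (32 ^ (l - 1) * ln (ln x) ^ (l - 1))"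
        using assms elim lnx sqrt_le prime_recip_sum_power_le_ln_ln[of x "k - 1" "l - 1"]
          prime_recip_sum_nonneg
        by (intro add_mono mult_mono divide_right_mono) auto
      also have "\<dots> = C * B" by (simp add: B_def C_def algebra_simps)
      finally show ?thesis .
    qed
    then show ?case by (simp add: B_def C_def)
  qed
qed

lemma card_almost_primes_upto_le_eventually:
  "eventually (\<lambda>x. real (card {n \<in> almost_primes l. real n \<le> x})
    \<le> (real l + 1) * (1 + 16 * real l * 32 ^ (l - 1)) * x * ln (ln x) ^ (l - 1) / ln x) at_top"
proof -
  define C where "C = 1 + 16 * real l * 32 ^ (l - 1)"
  have "eventually (\<lambda>x. real (card (factor_count_eq_upto k x))
      \<le> C * x * ln (ln x) ^ (l - 1) / ln x) at_top" if "k \<in> {..l}" for k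
    using card_factor_count_eq_upto_le_eventually[of k l] that by (simp add: C_def)
  then have "eventually (\<lambda>x. \<forall>k\<in>{..l}. real (card (factor_count_eq_upto k x))
      \<le> C * x * ln (ln x) ^ (l - 1) / ln x) at_top"
    by (intro eventually_ball_finite) auto
  then show ?thesis
  proof eventually_elim
    case (elim x)
    have "{n \<in> almost_primes l. real n \<le> x} = (\<Union>k\<in>{..l}. factor_count_eq_upto k x)"
      by (auto simp: almost_primes_prime_factor_count factor_count_eq_upto_def)
    then have "card {n \<in> almost_primes l. real n \<le> x} \<le> (\<Sum>k\<in>{..l}. card (factor_count_eq_upto k x))"
      by (simp add: card_UN_le)
    then have "real (card {n \<in> almost_primes l. real n \<le> x})
        \<le> (\<Sum>k\<in>{..l}. real (card (factor_count_eq_upto k x)))"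
      by (simp flip: of_nat_sum)
    also have "\<dots> \<le> (\<Sum>k\<in>{..l}. C * x * ln (ln x) ^ (l - 1) / ln x)"
      using elim by (intro sum_mono) auto
    finally show ?case by (simp add: C_def algebra_simps)
  qed
qed

lemma prime_recip_sum_root_ge_eventually:
  fixes l :: nat
  assumes l: "l \<ge> 1"
  shows "\<exists>a>0. eventually (\<lambda>x. a * ln (ln x) \<le> prime_recip_sum (x powr (1 / (2 * real l)))) at_top"
proof -
  obtain a where a: "a > 0" and "eventually (\<lambda>y. prime_recip_sum y \<ge> a * ln (ln y)) at_top"
    using prime_recip_sum_ge_eventually by blast
  then obtain Y where Y: "\<And>y. y \<ge> Y \<Longrightarrow> prime_recip_sum y \<ge> a * ln (ln y)"
    by (auto simp: eventually_at_top_linorder)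
  define Y' where "Y' = max Y 1"
  have "eventually (\<lambda>x::real. x \<ge> Y' ^ (2 * l) \<and> x \<ge> 4 \<and> ln (ln x) \<ge> 2 * ln (2 * real l)) at_top"
    by (intro eventually_conj eventually_ge_at_top) real_asymp
  then have "eventually (\<lambda>x. a / 2 * ln (ln x)
      \<le> prime_recip_sum (x powr (1 / (2 * real l)))) at_top"
  proof eventually_elim
    case (elim x)
    define y where "y = x powr (1 / (2 * real l))"
    have lnx: "ln x > 0" using elim by simp
    have yl: "y ^ l = sqrt x" and lny: "ln y = ln x / (2 * real l)"
      unfolding y_def using elim l
      by (intro power_powr_inverse_double ln_powr_inverse_double; simp)+
    have "(Y' ^ l) ^ 2 \<le> x" using elim by (simp add: power_mult [symmetric] mult.commute)
    then have "Y' ^ Suc (l - 1) \<le> y ^ Suc (l - 1)" using yl l by (simp add: real_le_rsqrt)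
    then have "y \<ge> Y'" by (rule power_le_imp_le_base) (simp add: y_def)
    then have "a * ln (ln y) \<le> prime_recip_sum y" using Y by (simp add: Y'_def)
    moreover have "ln (ln y) = ln (ln x) - ln (2 * real l)" using lnx l by (simp add: lny ln_div)
    moreover have "ln (2 * real l) \<ge> 0" using l by simp
    ultimately have "ln (ln x) / 2 \<le> ln (ln y)" using elim by linarith
    then have "a * (ln (ln x) / 2) \<le> a * ln (ln y)" using a by (intro mult_left_mono) auto
    then show ?case using \<open>a * ln (ln y) \<le> prime_recip_sum y\<close> by (simp add: y_def)
  qed
  then show ?thesis using a by (intro exI[of _ "a / 2"]) simp
qed

lemma card_factor_count_eq_upto_ge_eventually:
  assumes l: "l \<ge> 1"
  shows "\<exists>c>0. eventually (\<lambda>x. c * x * ln (ln x) ^ (l - 1) / ln x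
    \<le> real (card (factor_count_eq_upto l x))) at_top"
proof -
  obtain a where a: "a > 0" and root: "eventually (\<lambda>x. a * ln (ln x)
      \<le> prime_recip_sum (x powr (1 / (2 * real l)))) at_top"
    using prime_recip_sum_root_ge_eventually[OF l] by blast
  define c where "c = ln 2 / 4 * a ^ (l - 1) / (fact (l - 1) * l)"
  have "eventually (\<lambda>x. c * x * ln (ln x) ^ (l - 1) / ln x
      \<le> real (card (factor_count_eq_upto l x))) at_top"
    using root eventually_ge_at_top[of 4] eventually_ge_at_top[of "exp 1"]
  proof eventually_elim
    case (elim x)
    define y where "y = x powr (1 / (2 * real l))"
    define L where "L = ln (ln x)"
    have lnx: "ln x \<ge> 1" using elim by (subst ln_ge_iff) auto
    then have "L \<ge> 0" by (simp add: L_def)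
    have yl: "y ^ l = sqrt x" and y1: "y \<ge> 1"
      unfolding y_def using elim l by (auto intro: power_powr_inverse_double ge_one_powr_ge_zero)
    have "(a * L) ^ (l - 1) \<le> prime_recip_sum y ^ (l - 1)"
      using elim a \<open>L \<ge> 0\<close> by (intro power_mono) (auto simp: y_def L_def)
    also have "\<dots> \<le> fact (l - 1) * (\<Sum>m\<in>smooth_factor_count_eq (l - 1) y. 1 / real m)"
      by (rule prime_recip_sum_power_le_smooth_sum)
    finally have "ln 2 / 4 * x / ln x * ((a * L) ^ (l - 1) / fact (l - 1))
        \<le> ln 2 / 4 * x / ln x * (\<Sum>m\<in>smooth_factor_count_eq (l - 1) y. 1 / real m)"
      using elim lnx by (intro mult_left_mono) (auto simp: divide_le_eq mult.commute)
    also have "\<dots> \<le> l * card (factor_count_eq_upto l x)"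
      using l yl y1 elim by (intro card_factor_count_eq_upto_ge) auto
    finally have "ln 2 / 4 * x / ln x * ((a * L) ^ (l - 1) / fact (l - 1)) / l
        \<le> l * card (factor_count_eq_upto l x) / l"
      using l by (intro divide_right_mono) auto
    moreover have "c * x * L ^ (l - 1) / ln x
        = ln 2 / 4 * x / ln x * ((a * L) ^ (l - 1) / fact (l - 1)) / l"
      by (simp add: c_def power_mult_distrib mult_ac)
    ultimately show ?case using l by (simp add: L_def)
  qed
  moreover have "c > 0" using a l by (simp add: c_def)
  ultimately show ?thesis by blast
qed

lemma ln_ln_power_div_ln_antimono:
  fixes M x :: real and n :: nat
  assumes M: "M > 0" "ln M > 1" "ln (ln M) \<ge> n" and x: "M \<le> x"
  shows "ln (ln x) ^ n / ln x \<le> ln (ln M) ^ n / ln M"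
proof -
  define a where "a = ln (ln M)"
  define u where "u = ln x / ln M"
  have a: "a > 0" unfolding a_def using M by (intro ln_gt_zero) auto
  have lnM: "ln M > 0" using M(2) by linarith
  moreover have "ln x \<ge> ln M" using M x by simp
  ultimately have u: "u \<ge> 1" and lnx: "ln x = u * ln M" by (simp_all add: u_def)
  have "ln (ln x) = a * (1 + ln u / a)" using u M a by (simp add: lnx a_def ln_mult field_simps)
  then have "ln (ln x) ^ n = a ^ n * (1 + ln u / a) ^ n" by (simp add: power_mult_distrib)
  also have "(1 + ln u / a) ^ n \<le> exp (ln u / a) ^ n"
    using a u by (intro power_mono exp_ge_add_one_self_aux) auto
  also have "\<dots> = exp (n * (ln u / a))" by (rule exp_of_nat_mult [symmetric])
  also have "\<dots> \<le> exp (ln u)"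
  proof -
    have "real n * (ln u / a) \<le> a * (ln u / a)"
      using M(3) u a by (intro mult_right_mono) (auto simp: a_def)
    then show ?thesis using a by simp
  qed
  also have "exp (ln u) = u" using u by simp
  finally have "ln (ln x) ^ n / ln x \<le> a ^ n * u / ln x"
    using a u lnM by (intro divide_right_mono mult_left_mono) (auto simp: lnx)
  also have "a ^ n * u / ln x = a ^ n / ln M" using u by (simp add: lnx)
  finally show ?thesis by (simp add: a_def)
qed

lemma card_almost_primes_upto_le_uniformly:
  "\<exists>C>0. eventually (\<lambda>M. \<forall>x\<ge>M. real (card {n \<in> almost_primes l. real n \<le> x})
    \<le> C * (ln (ln M) ^ (l - 1) / ln M) * x) at_top"
proof -
  define C where "C = (real l + 1) * (1 + 16 * real l * 32 ^ (l - 1))"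
  obtain X where X: "\<And>x. x \<ge> X \<Longrightarrow> real (card {n \<in> almost_primes l. real n \<le> x})
      \<le> C * x * ln (ln x) ^ (l - 1) / ln x"
    using card_almost_primes_upto_le_eventually[of l]
    unfolding C_def eventually_at_top_linorder by blast
  have "eventually (\<lambda>M::real. M \<ge> X \<and> M > 0 \<and> ln M > 1 \<and> ln (ln M) \<ge> real (l - 1)) at_top"
    by (intro eventually_conj eventually_ge_at_top eventually_gt_at_top) real_asymp+
  then have "eventually (\<lambda>M. \<forall>x\<ge>M. real (card {n \<in> almost_primes l. real n \<le> x})
      \<le> C * (ln (ln M) ^ (l - 1) / ln M) * x) at_top"
  proof eventually_elim
    case (elim M)
    show ?case
    proof (intro allI impI)
      fix x assume "M \<le> x"
      then have "real (card {n \<in> almost_primes l. real n \<le> x})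
          \<le> C * x * (ln (ln x) ^ (l - 1) / ln x)"
        using X elim by simp
      also have "\<dots> \<le> C * x * (ln (ln M) ^ (l - 1) / ln M)"
        using elim \<open>M \<le> x\<close> by (intro mult_left_mono ln_ln_power_div_ln_antimono) (auto simp: C_def)
      finally show "real (card {n \<in> almost_primes l. real n \<le> x})
          \<le> C * (ln (ln M) ^ (l - 1) / ln M) * x"
        by (simp add: mult_ac)
    qed
  qed
  moreover have "C > 0" by (simp add: C_def add_pos_nonneg)
  ultimately show ?thesis by blast
qed

lemma P_tail_le_eventually:
  assumes s: "s > 1"
  shows "\<exists>C>0. eventually (\<lambda>M. P_tail l s M
    \<le> C * ln (ln M) ^ (l - 1) / (M powr (s - 1) * ln M)) at_top"
proof -
  obtain Cu where Cu: "Cu > 0" and count: "eventually (\<lambda>M. \<forall>x\<ge>M.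
      real (card {n \<in> almost_primes l. real n \<le> x}) \<le> Cu * (ln (ln M) ^ (l - 1) / ln M) * x) at_top"
    using card_almost_primes_upto_le_uniformly by blast
  define C where "C = 2 * Cu / (1 - 2 powr (1 - s))"
  have "2 powr (1 - s) < 1" using s by (intro powr_less_one) auto
  then have "C > 0" using Cu by (simp add: C_def)
  moreover have "eventually (\<lambda>M. P_tail l s M
      \<le> C * ln (ln M) ^ (l - 1) / (M powr (s - 1) * ln M)) at_top"
    using count eventually_gt_at_top[of 0]
  proof eventually_elim
    case (elim M)
    have "P_tail l s M
        \<le> 2 * (Cu * (ln (ln M) ^ (l - 1) / ln M)) * M powr (1 - s) / (1 - 2 powr (1 - s))"
      unfolding P_tail_def using s elim by (intro infsum_recip_powr_tail_le(2)) auto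
    also have "M powr (1 - s) = 1 / M powr (s - 1)"
      by (simp add: powr_minus_divide [symmetric])
    finally show ?case by (simp add: C_def mult_ac)
  qed
  ultimately show ?thesis by blast
qed

lemma ln_ln_power_div_ln_mult_ge:
  fixes K M :: real and n :: nat
  assumes K: "1 \<le> K" "K \<le> M" and M: "ln M \<ge> 1"
  shows "ln (ln M) ^ n / ln M / 2 \<le> ln (ln (K * M)) ^ n / ln (K * M)"
proof -
  have M0: "M > 0" using K by linarith
  have "ln M \<le> ln (K * M)" using K M0 by (simp add: ln_mult)
  moreover have "ln (K * M) \<le> 2 * ln M" using K M0 by (simp add: ln_mult)
  ultimately have "ln (ln M) ^ n / (2 * ln M) \<le> ln (ln M) ^ n / ln (K * M)"
    using M by (intro divide_left_mono) auto
  also have "\<dots> \<le> ln (ln (K * M)) ^ n / ln (K * M)"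
    using M \<open>ln M \<le> ln (K * M)\<close> by (intro divide_right_mono power_mono) auto
  finally show ?thesis by simp
qed

lemma card_factor_count_eq_upto_le_almost_primes:
  "card (factor_count_eq_upto l x)
    \<le> card {n \<in> almost_primes l. y \<le> real n \<and> real n \<le> x} + card {n \<in> almost_primes l. real n \<le> y}"
proof -
  let ?A = "{n \<in> almost_primes l. y \<le> real n \<and> real n \<le> x}"
  let ?B = "{n \<in> almost_primes l. real n \<le> y}"
  have "finite ?A" "finite ?B"
    by (rule finite_subset[of _ "{..nat \<lfloor>x\<rfloor>}"], force simp: le_nat_floor, simp,
        rule finite_subset[of _ "{..nat \<lfloor>y\<rfloor>}"], force simp: le_nat_floor, simp)
  moreover have "factor_count_eq_upto l x \<subseteq> ?A \<union> ?B"
    by (auto simp: factor_count_eq_upto_def almost_primes_prime_factor_count)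
  ultimately have "card (factor_count_eq_upto l x) \<le> card (?A \<union> ?B)" by (intro card_mono) auto
  also have "\<dots> \<le> card ?A + card ?B" by (rule card_Un_le)
  finally show ?thesis .
qed

text \<open>For large \<open>K\<close> the lower bound for the numbers up to \<open>K M\<close> with exactly \<open>l\<close> prime
  factors exceeds the upper bound for the almost primes up to \<open>M\<close> by \<open>M (ln ln M)^(l-1) / ln M\<close>.\<close>

lemma card_almost_primes_between_ge_eventually:
  assumes l: "l \<ge> 1"
  shows "\<exists>K\<ge>1. eventually (\<lambda>M. M * (ln (ln M) ^ (l - 1) / ln M)
    \<le> real (card {n \<in> almost_primes l. M \<le> real n \<and> real n \<le> K * M})) at_top"
proof -
  obtain Cu where Cu: "Cu > 0" and count: "eventually (\<lambda>M. \<forall>x\<ge>M.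
      real (card {n \<in> almost_primes l. real n \<le> x}) \<le> Cu * (ln (ln M) ^ (l - 1) / ln M) * x) at_top"
    using card_almost_primes_upto_le_uniformly by blast
  obtain cl where cl: "cl > 0" and "eventually (\<lambda>x. cl * x * ln (ln x) ^ (l - 1) / ln x
      \<le> real (card (factor_count_eq_upto l x))) at_top"
    using card_factor_count_eq_upto_ge_eventually[OF l] by blast
  then obtain X where X: "\<And>x. x \<ge> X \<Longrightarrow> cl * x * ln (ln x) ^ (l - 1) / ln x
      \<le> real (card (factor_count_eq_upto l x))"
    by (auto simp: eventually_at_top_linorder)
  define K where "K = 2 * (Cu + 1) / cl + 1"
  have K: "K \<ge> 1" using Cu cl by (simp add: K_def)
  have clK: "cl * K / 2 - Cu = 1 + cl / 2" using cl by (simp add: K_def field_simps)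
  have "eventually (\<lambda>M. M * (ln (ln M) ^ (l - 1) / ln M)
      \<le> real (card {n \<in> almost_primes l. M \<le> real n \<and> real n \<le> K * M})) at_top"
    using count eventually_ge_at_top[of X] eventually_ge_at_top[of K]
      eventually_ge_at_top[of "exp 1"]
  proof eventually_elim
    case (elim M)
    define L where "L = ln (ln M) ^ (l - 1) / ln M"
    have M: "M \<ge> 1" "ln M \<ge> 1" using elim K by (auto simp: ln_ge_iff)
    then have L: "L \<ge> 0" by (simp add: L_def)
    have KM: "M \<le> K * M" using K M by (simp add: mult_le_cancel_right1)
    have "cl * (K * M) * (L / 2) \<le> cl * (K * M) * (ln (ln (K * M)) ^ (l - 1) / ln (K * M))"
      using cl K M elim ln_ln_power_div_ln_mult_ge[of K M "l - 1"]
      by (intro mult_left_mono) (auto simp: L_def)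
    also have "\<dots> \<le> real (card (factor_count_eq_upto l (K * M)))"
      using X[of "K * M"] KM elim by simp
    also have "\<dots> \<le> card {n \<in> almost_primes l. M \<le> real n \<and> real n \<le> K * M}
        + card {n \<in> almost_primes l. real n \<le> M}"
      using card_factor_count_eq_upto_le_almost_primes by (simp flip: of_nat_add)
    moreover have "real (card {n \<in> almost_primes l. real n \<le> M}) \<le> Cu * L * M"
      using elim by (simp add: L_def)
    moreover have "(cl * K / 2 - Cu) * (M * L) = cl * (K * M) * (L / 2) - Cu * L * M"
      by (simp add: algebra_simps)
    ultimately have "(cl * K / 2 - Cu) * (M * L)
        \<le> real (card {n \<in> almost_primes l. M \<le> real n \<and> real n \<le> K * M})"
      by linarith
    moreover have "M * L \<le> (cl * K / 2 - Cu) * (M * L)"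
      unfolding clK distrib_right using cl M L by simp
    ultimately show ?case by (simp add: L_def)
  qed
  with K show ?thesis by blast
qed

lemma P_tail_ge_eventually:
  assumes l: "l \<ge> 1" and s: "s > 1"
  shows "\<exists>C>0. eventually (\<lambda>M. C * ln (ln M) ^ (l - 1) / (M powr (s - 1) * ln M)
    \<le> P_tail l s M) at_top"
proof -
  obtain K where K: "K \<ge> 1" and between: "eventually (\<lambda>M. M * (ln (ln M) ^ (l - 1) / ln M)
      \<le> real (card {n \<in> almost_primes l. M \<le> real n \<and> real n \<le> K * M})) at_top"
    using card_almost_primes_between_ge_eventually[OF l] by blast
  obtain Cu where count: "eventually (\<lambda>M. \<forall>x\<ge>M.
      real (card {n \<in> almost_primes l. real n \<le> x}) \<le> Cu * (ln (ln M) ^ (l - 1) / ln M) * x) at_top"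
    using card_almost_primes_upto_le_uniformly by blast
  define C where "C = 1 / K powr s"
  have "eventually (\<lambda>M. C * ln (ln M) ^ (l - 1) / (M powr (s - 1) * ln M) \<le> P_tail l s M) at_top"
    using between count eventually_gt_at_top[of 0]
  proof eventually_elim
    case (elim M)
    have summable: "(\<lambda>k. 1 / real k powr s) summable_on {k \<in> almost_primes l. real k \<ge> M}"
      using elim s
      by (intro infsum_recip_powr_tail_le(1)[where B = "Cu * (ln (ln M) ^ (l - 1) / ln M)"]) auto
    have "M powr s = M * M powr (s - 1)" using elim by (simp add: powr_diff)
    then have "C * ln (ln M) ^ (l - 1) / (M powr (s - 1) * ln M)
        = M * (ln (ln M) ^ (l - 1) / ln M) / (K * M) powr s"
      using elim K by (simp add: C_def powr_mult field_simps)
    also have "\<dots> \<le> real (card {n \<in> almost_primes l. M \<le> real n \<and> real n \<le> K * M}) / (K * M) powr s"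
      using elim by (intro divide_right_mono) auto
    also have "\<dots> \<le> P_tail l s M"
      unfolding P_tail_def using s elim summable by (intro infsum_recip_powr_tail_ge) auto
    finally show ?case .
  qed
  moreover have "C > 0" using K by (simp add: C_def)
  ultimately show ?thesis by blast
qed

theorem theorem1p7:
  fixes l :: nat and s :: real
  assumes "l \<ge> 1" and "s > 1"
  shows "\<exists>C1 C2 M0. C1 > 0 \<and> C2 > 0 \<and> M0 \<ge> 1 \<and>
    (\<forall>M::real. M \<ge> M0 \<longrightarrow>
       C1 * (ln (ln M)) ^ (l - 1) / (M powr (s - 1) * ln M) \<le> P_tail l s M \<and>
       P_tail l s M \<le> C2 * (ln (ln M)) ^ (l - 1) / (M powr (s - 1) * ln M))"
proof -
  obtain C1 where C1: "C1 > 0" and lower: "eventually (\<lambda>M.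
      C1 * ln (ln M) ^ (l - 1) / (M powr (s - 1) * ln M) \<le> P_tail l s M) at_top"
    using P_tail_ge_eventually[OF assms] by blast
  obtain C2 where C2: "C2 > 0" and upper: "eventually (\<lambda>M.
      P_tail l s M \<le> C2 * ln (ln M) ^ (l - 1) / (M powr (s - 1) * ln M)) at_top"
    using P_tail_le_eventually[OF assms(2)] by blast
  obtain M0 where M0: "\<And>M. M \<ge> M0 \<Longrightarrow>
      C1 * ln (ln M) ^ (l - 1) / (M powr (s - 1) * ln M) \<le> P_tail l s M \<and>
      P_tail l s M \<le> C2 * ln (ln M) ^ (l - 1) / (M powr (s - 1) * ln M)"
    using eventually_conj[OF lower upper] by (auto simp: eventually_at_top_linorder)
  show ?thesis
    using C1 C2 M0 by (intro exI[of _ C1] exI[of _ C2] exI[of _ "max M0 1"]) auto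
qed

end
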